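(* Fix $\mu>0$, $\rho>0$ and $s\in\mathbb{R}^m$. For $a,b\in\mathbb{R}$ let $w(a,b;\mu,\rho)=\frac{1}{2\rho}\big(\sqrt{(b-\rho a)^2+4\rho\mu}-(b-\rho a)\big)$. Consider the logarithmic-barrier subproblem $$(\mathrm{LB})\quad \min_{x\in\mathbb{R}^n,\ z\in\mathbb{R}^m_{++}}\ f(x)-\mu\sum_{i=1}^m\ln z_i\quad\text{s.t.}\quad c(x)-z=0,$$ and the modified problem $$(\mathrm{MB}_s)\quad \min_{x\in\mathbb{R}^n}\ f(x)-\mu\sum_{i=1}^m\ln w(c_i(x),s_i;\mu,\rho)\quad\text{s.t.}\quad c_i(x)-w(c_i(x),s_i;\mu,\rho)=0,\ i=1,\dots,m.$$ (1) If $(x^*,z^* )$ is a local solution of (LB) and $c_i(x^* )=w(c_i(x^* ),s_i;\mu,\rho)$ for $i=1,\dots,m$, then $x^*$ is a local solution of $(\mathrm{MB}_s)$. (2) Suppose $((x^*,z^* ),s^* )$ is a KKT pair of (LB), i.e. $c(x^* )=z^*>0$, $\nabla f(x^* )-\nabla c(x^* )s^*=0$ and $s_i^*=\mu/z_i^*$ for all $i$. Then $c_i(x^* )=w(c_i(x^* ),s_i^*;\mu,\rho)$ for all $i$, and $x^*$ is a KKT point of $(\mathrm{MB}_{s^*})$ with Lagrange multiplier $s_i^*$ associated with the constraint $c_i(x)-w(c_i(x),s_i^*;\mu,\rho)=0$; that is, $\nabla_x L(x^*,s^*,s^* )=0$, where $$L(x,s,\lambda)=f(x)-\mu\sum_{i=1}^m\ln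 w(c_i(x),s_i;\mu,\rho)-\sum_{i=1}^m\lambda_i\big(c_i(x)-w(c_i(x),s_i;\mu,\rho)\big).$$
   Context: $f:\mathbb{R}^n\to\mathbb{R}$ and $c=(c_1,\dots,c_m):\mathbb{R}^n\to\mathbb{R}^m$ are twice continuously differentiable; $\nabla c(x)\in\mathbb{R}^{n\times m}$ denotes the matrix whose $i$-th column is $\nabla c_i(x)$. $\mathbb{R}^m_{++}$ denotes vectors with all components positive. Note $w(a,b;\mu,\rho)>0$ for all $a,b$. *)

theory Defs
  imports "HOL-Analysis.Analysis"
begin

definition C2 :: "('a::euclidean_space \<Rightarrow> real) \<Rightarrow> bool" where
  "C2 g \<longleftrightarrow> (\<exists>(g' :: 'a \<Rightarrow> 'a \<Rightarrow>\<^sub>L real) (g'' :: 'a \<Rightarrow> 'a \<Rightarrow>\<^sub>L ('a \<Rightarrow>\<^sub>L real)).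
      (\<forall>x. (g has_derivative blinfun_apply (g' x)) (at x)) \<and>
      (\<forall>x. (g' has_derivative blinfun_apply (g'' x)) (at x)) \<and>
      continuous_on UNIV g'')"

definition wfun :: "real \<Rightarrow> real \<Rightarrow> real \<Rightarrow> real \<Rightarrow> real" where
  "wfun a b \<mu> \<rho> = (sqrt ((b - \<rho> * a)^2 + 4 * \<rho> * \<mu>) - (b - \<rho> * a)) / (2 * \<rho>)"

definition local_solution :: "('a::metric_space \<Rightarrow> real) \<Rightarrow> 'a set \<Rightarrow> 'a \<Rightarrow> bool" where
  "local_solution F S p \<longleftrightarrow> p \<in> S \<and> (\<exists>e>0. \<forall>q\<in>S. dist q p < e \<longrightarrow> F p \<le> F q)"

definition LB_obj :: "(real^'n \<Rightarrow> real) \<Rightarrow> real \<Rightarrow> ((real^'n) \<times> (real^'m)) \<Rightarrow> real" where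
  "LB_obj f \<mu> p = f (fst p) - \<mu> * (\<Sum>i\<in>UNIV. ln (snd p $ i))"

definition LB_feas :: "(real^'n \<Rightarrow> real^'m) \<Rightarrow> ((real^'n) \<times> (real^'m)) set" where
  "LB_feas c = {(x, z). (\<forall>i. z $ i > 0) \<and> c x - z = 0}"

definition MB_obj :: "(real^'n \<Rightarrow> real) \<Rightarrow> (real^'n \<Rightarrow> real^'m) \<Rightarrow> real \<Rightarrow> real \<Rightarrow> real^'m \<Rightarrow> real^'n \<Rightarrow> real" where
  "MB_obj f c \<mu> \<rho> s x = f x - \<mu> * (\<Sum>i\<in>UNIV. ln (wfun (c x $ i) (s $ i) \<mu> \<rho>))"

definition MB_feas :: "(real^'n \<Rightarrow> real^'m) \<Rightarrow> real \<Rightarrow> real \<Rightarrow> real^'m \<Rightarrow> (real^'n) set" where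
  "MB_feas c \<mu> \<rho> s = {x. \<forall>i. c x $ i - wfun (c x $ i) (s $ i) \<mu> \<rho> = 0}"

definition MB_Lag :: "(real^'n \<Rightarrow> real) \<Rightarrow> (real^'n \<Rightarrow> real^'m) \<Rightarrow> real \<Rightarrow> real \<Rightarrow> real^'n \<Rightarrow> real^'m \<Rightarrow> real^'m \<Rightarrow> real" where
  "MB_Lag f c \<mu> \<rho> x s lam = f x - \<mu> * (\<Sum>i\<in>UNIV. ln (wfun (c x $ i) (s $ i) \<mu> \<rho>))
     - (\<Sum>i\<in>UNIV. lam $ i * (c x $ i - wfun (c x $ i) (s $ i) \<mu> \<rho>))"

end

theory Submission
  imports Defs
begin

text \<open>For (1): on the feasible set of the modified problem each c_i(x) is a value of w, hence
positive, so x \<mapsto> (x, c x) maps that set continuously into the feasible set of (LB) and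
the two objectives agree along this map; a local minimiser therefore pulls back.
For (2): the multiplier s_i = \<mu>/z_i makes z_i a fixed point of a \<mapsto> w(a, s_i), and at
such a point the gradient of the Lagrangian is \<nabla>f - \<Sum> (s_i w' + s_i (1 - w')) \<nabla>c_i,
in which the unknown derivative w' of w cancels.\<close>

lemma GDERIV_sum:
  assumes "finite A" "\<And>i. i \<in> A \<Longrightarrow> GDERIV (F i) x :> D i"
  shows "GDERIV (\<lambda>y. \<Sum>i\<in>A. F i y) x :> (\<Sum>i\<in>A. D i)"
  using assms
proof (induction A rule: finite_induct)
  case empty
  then show ?case by (simp add: GDERIV_const)
next
  case (insert a A)
  then show ?case by (simp add: GDERIV_add)
qed

lemma continuous_on_C2: "C2 g \<Longrightarrow> continuous_on UNIV g"
  unfolding C2_def by (meson continuous_at_imp_continuous_on has_derivative_continuous)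

lemma local_solution_pullback:
  assumes "local_solution F S (h x)" and "continuous (at x) h"
    and "x \<in> T" and "h ` T \<subseteq> S" and "\<And>y. y \<in> T \<Longrightarrow> G y = F (h y)"
  shows "local_solution G T x"
proof -
  obtain e where "e > 0" and min: "\<And>q. q \<in> S \<Longrightarrow> dist q (h x) < e \<Longrightarrow> F (h x) \<le> F q"
    using assms(1) unfolding local_solution_def by blast
  then obtain d where "d > 0" and near: "\<And>y. dist y x < d \<Longrightarrow> dist (h y) (h x) < e"
    using assms(2) unfolding continuous_at_eps_delta by blast
  have "G x \<le> G y" if "y \<in> T" "dist y x < d" for y
    using min[of "h y"] near[OF that(2)] that(1) assms(3-5) by auto
  with \<open>d > 0\<close> assms(3) show ?thesis
    unfolding local_solution_def by blast
qed

lemma wfun_pos: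
  assumes "\<mu> > 0" "\<rho> > 0"
  shows "wfun a b \<mu> \<rho> > 0"
proof -
  have "\<bar>b - \<rho> * a\<bar> = sqrt ((b - \<rho> * a)\<^sup>2)" by simp
  also have "\<dots> < sqrt ((b - \<rho> * a)\<^sup>2 + 4 * \<rho> * \<mu>)"
    using assms by (intro real_sqrt_less_mono) simp
  finally show ?thesis
    using assms unfolding wfun_def by (simp add: divide_pos_pos)
qed

lemma wfun_div_self:
  assumes "z > 0" "\<mu> > 0" "\<rho> > 0"
  shows "wfun z (\<mu> / z) \<mu> \<rho> = z"
proof -
  have "(\<mu> / z - \<rho> * z)\<^sup>2 + 4 * \<rho> * \<mu> = (\<mu> / z + \<rho> * z)\<^sup>2"
    using assms by (simp add: power2_eq_square field_simps)
  moreover have "\<mu> / z + \<rho> * z > 0"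
    using assms by (simp add: add_pos_pos)
  ultimately have "sqrt ((\<mu> / z - \<rho> * z)\<^sup>2 + 4 * \<rho> * \<mu>) = \<mu> / z + \<rho> * z"
    by simp
  then show ?thesis
    using assms by (simp add: wfun_def field_simps)
qed

lemma wfun_has_real_derivative:
  assumes "\<mu> > 0" "\<rho> > 0"
  shows "((\<lambda>a. wfun a b \<mu> \<rho>) has_real_derivative
           (1 - (b - \<rho> * a) / sqrt ((b - \<rho> * a)\<^sup>2 + 4 * \<rho> * \<mu>)) / 2) (at a)"
proof -
  have "(b - \<rho> * a)\<^sup>2 + 4 * \<rho> * \<mu> > 0"
    using assms by (simp add: add_nonneg_pos)
  then show ?thesis
    using assms unfolding wfun_def
    by (auto intro!: derivative_eq_intros simp: field_simps)
qed

lemma GDERIV_MB_Lag: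
  fixes f :: "real^'n \<Rightarrow> real" and c :: "real^'n \<Rightarrow> real^'m"
  assumes "\<mu> > 0" "\<rho> > 0"
    and gf: "GDERIV f x :> gf" and gc: "\<And>i. GDERIV (\<lambda>y. c y $ i) x :> gc i"
    and dw: "\<And>i. ((\<lambda>a. wfun a (s $ i) \<mu> \<rho>) has_real_derivative dw i) (at (c x $ i))"
  shows "GDERIV (\<lambda>y. MB_Lag f c \<mu> \<rho> y s lam) x :>
           gf - (\<Sum>i\<in>UNIV. (\<mu> / wfun (c x $ i) (s $ i) \<mu> \<rho> * dw i + lam $ i * (1 - dw i)) *\<^sub>R gc i)"
proof -
  define w where "w i y = wfun (c y $ i) (s $ i) \<mu> \<rho>" for i y
  have gw: "GDERIV (w i) x :> dw i *\<^sub>R gc i" for i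
    unfolding w_def using GDERIV_DERIV_compose[OF gc dw] .
  have gln: "GDERIV (\<lambda>y. ln (w i y)) x :> (1 / w i x) *\<^sub>R (dw i *\<^sub>R gc i)" for i
    using GDERIV_DERIV_compose[OF gw DERIV_ln_divide] wfun_pos[OF assms(1,2)]
    by (simp add: w_def)
  have gbarrier: "GDERIV (\<lambda>y. \<mu> * (\<Sum>i\<in>UNIV. ln (w i y))) x
      :> \<mu> *\<^sub>R (\<Sum>i\<in>UNIV. (1 / w i x) *\<^sub>R (dw i *\<^sub>R gc i))"
  proof -
    have "GDERIV (\<lambda>y. \<Sum>i\<in>UNIV. ln (w i y)) x :> (\<Sum>i\<in>UNIV. (1 / w i x) *\<^sub>R (dw i *\<^sub>R gc i))"
      by (rule GDERIV_sum, simp, rule gln)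
    from GDERIV_DERIV_compose[OF this DERIV_cmult_Id[of \<mu>]] show ?thesis by simp
  qed
  have gpenalty: "GDERIV (\<lambda>y. \<Sum>i\<in>UNIV. lam $ i * (c y $ i - w i y)) x
      :> (\<Sum>i\<in>UNIV. lam $ i *\<^sub>R (gc i - dw i *\<^sub>R gc i))"
  proof (rule GDERIV_sum)
    fix i
    from GDERIV_DERIV_compose[OF GDERIV_diff[OF gc gw] DERIV_cmult_Id[of "lam $ i"]]
    show "GDERIV (\<lambda>y. lam $ i * (c y $ i - w i y)) x :> lam $ i *\<^sub>R (gc i - dw i *\<^sub>R gc i)"
      by simp
  qed simp
  have "GDERIV (\<lambda>y. MB_Lag f c \<mu> \<rho> y s lam) x :>
      gf - \<mu> *\<^sub>R (\<Sum>i\<in>UNIV. (1 / w i x) *\<^sub>R (dw i *\<^sub>R gc i))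
         - (\<Sum>i\<in>UNIV. lam $ i *\<^sub>R (gc i - dw i *\<^sub>R gc i))"
    unfolding MB_Lag_def w_def[symmetric]
    using GDERIV_diff[OF GDERIV_diff[OF gf gbarrier] gpenalty] .
  then show ?thesis
    by (simp add: w_def scaleR_sum_right algebra_simps sum.distrib sum_subtractf)
qed

lemma LB_local_solution_imp_MB_local_solution:
  fixes f :: "real^'n \<Rightarrow> real" and c :: "real^'n \<Rightarrow> real^'m"
  assumes "\<mu> > 0" "\<rho> > 0" and "continuous_on UNIV c"
    and "local_solution (LB_obj f \<mu>) (LB_feas c) (x, z)"
    and "\<forall>i. c x $ i = wfun (c x $ i) (s $ i) \<mu> \<rho>"
  shows "local_solution (MB_obj f c \<mu> \<rho> s) (MB_feas c \<mu> \<rho> s) x"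
proof (rule local_solution_pullback)
  have "z = c x"
    using assms(4) by (simp add: local_solution_def LB_feas_def)
  then show "local_solution (LB_obj f \<mu>) (LB_feas c) (x, c x)"
    using assms(4) by simp
  show "continuous (at x) (\<lambda>y. (y, c y))"
    using assms(3) by (simp add: continuous_on_eq_continuous_at continuous_Pair)
  show "x \<in> MB_feas c \<mu> \<rho> s"
    using assms(5) by (simp add: MB_feas_def)
  show "(\<lambda>y. (y, c y)) ` MB_feas c \<mu> \<rho> s \<subseteq> LB_feas c"
  proof (rule image_subsetI)
    fix y
    assume "y \<in> MB_feas c \<mu> \<rho> s"
    then have "c y $ i = wfun (c y $ i) (s $ i) \<mu> \<rho>" for i
      by (simp add: MB_feas_def)
    then have "c y $ i > 0" for i
      by (metis wfun_pos[OF assms(1,2)])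
    then show "(y, c y) \<in> LB_feas c"
      by (simp add: LB_feas_def)
  qed
  show "MB_obj f c \<mu> \<rho> s y = LB_obj f \<mu> (y, c y)" if "y \<in> MB_feas c \<mu> \<rho> s" for y
    using that by (simp add: MB_feas_def MB_obj_def LB_obj_def)
qed

lemma LB_KKT_imp_MB_KKT:
  fixes f :: "real^'n \<Rightarrow> real" and c :: "real^'n \<Rightarrow> real^'m"
  assumes "\<mu> > 0" "\<rho> > 0"
    and gf: "GDERIV f x :> gf" and gc: "\<And>i. GDERIV (\<lambda>y. c y $ i) x :> gc i"
    and pos: "\<And>i. c x $ i > 0"
    and stationary: "gf - (\<Sum>i\<in>UNIV. s $ i *\<^sub>R gc i) = 0"
    and mult: "\<And>i. s $ i = \<mu> / c x $ i"
  shows "\<forall>i. c x $ i = wfun (c x $ i) (s $ i) \<mu> \<rho>"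
    and "GDERIV (\<lambda>y. MB_Lag f c \<mu> \<rho> y s s) x :> 0"
proof -
  have fixpoint: "wfun (c x $ i) (s $ i) \<mu> \<rho> = c x $ i" for i
    using wfun_div_self[OF pos assms(1,2)] mult by simp
  then show "\<forall>i. c x $ i = wfun (c x $ i) (s $ i) \<mu> \<rho>"
    by simp
  show "GDERIV (\<lambda>y. MB_Lag f c \<mu> \<rho> y s s) x :> 0"
  proof -
    let ?dw = "\<lambda>i. (1 - (s $ i - \<rho> * c x $ i) / sqrt ((s $ i - \<rho> * c x $ i)\<^sup>2 + 4 * \<rho> * \<mu>)) / 2"
    have "GDERIV (\<lambda>y. MB_Lag f c \<mu> \<rho> y s s) x :>
        gf - (\<Sum>i\<in>UNIV. (\<mu> / wfun (c x $ i) (s $ i) \<mu> \<rho> * ?dw i + s $ i * (1 - ?dw i)) *\<^sub>R gc i)"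
      by (rule GDERIV_MB_Lag[OF assms(1,2) gf gc wfun_has_real_derivative[OF assms(1,2)]])
    moreover have "\<mu> / wfun (c x $ i) (s $ i) \<mu> \<rho> * ?dw i + s $ i * (1 - ?dw i) = s $ i" for i
      using fixpoint[of i] mult[of i] by (simp add: algebra_simps)
    ultimately show ?thesis
      using stationary by simp
  qed
qed

theorem lemma2p1:
  fixes f :: "real^'n \<Rightarrow> real" and c :: "real^'n \<Rightarrow> real^'m"
    and \<mu> \<rho> :: real and s :: "real^'m"
  assumes "C2 f" and "\<forall>i. C2 (\<lambda>x. c x $ i)"
    and "\<mu> > 0" and "\<rho> > 0"
  shows
    "(\<forall>xs zs. local_solution (LB_obj f \<mu>) (LB_feas c) (xs, zs)
        \<and> (\<forall>i. c xs $ i = wfun (c xs $ i) (s $ i) \<mu> \<rho>)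
        \<longrightarrow> local_solution (MB_obj f c \<mu> \<rho> s) (MB_feas c \<mu> \<rho> s) xs)
     \<and>
     (\<forall>xs zs ss gf gc.
        GDERIV f xs :> gf \<and> (\<forall>i. GDERIV (\<lambda>x. c x $ i) xs :> gc i)
        \<and> c xs = zs \<and> (\<forall>i. zs $ i > 0)
        \<and> gf - (\<Sum>i\<in>UNIV. ss $ i *\<^sub>R gc i) = 0
        \<and> (\<forall>i. ss $ i = \<mu> / zs $ i)
        \<longrightarrow> (\<forall>i. c xs $ i = wfun (c xs $ i) (ss $ i) \<mu> \<rho>)
            \<and> GDERIV (\<lambda>x. MB_Lag f c \<mu> \<rho> x ss ss) xs :> 0)"
proof (rule conjI; intro allI impI)
  have "continuous_on UNIV (\<lambda>x. \<chi> i. c x $ i)"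
    using assms(2) continuous_on_C2 by (intro continuous_on_vec_lambda) auto
  then have "continuous_on UNIV c"
    by simp
  then show "local_solution (MB_obj f c \<mu> \<rho> s) (MB_feas c \<mu> \<rho> s) xs"
    if "local_solution (LB_obj f \<mu>) (LB_feas c) (xs, zs)
        \<and> (\<forall>i. c xs $ i = wfun (c xs $ i) (s $ i) \<mu> \<rho>)" for xs zs
    using LB_local_solution_imp_MB_local_solution[OF assms(3,4)] that by blast
next
  fix xs zs ss gf gc
  assume "GDERIV f xs :> gf \<and> (\<forall>i. GDERIV (\<lambda>x. c x $ i) xs :> gc i)
        \<and> c xs = zs \<and> (\<forall>i. zs $ i > 0)
        \<and> gf - (\<Sum>i\<in>UNIV. ss $ i *\<^sub>R gc i) = 0
        \<and> (\<forall>i. ss $ i = \<mu> / zs $ i)"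
  then show "(\<forall>i. c xs $ i = wfun (c xs $ i) (ss $ i) \<mu> \<rho>)
      \<and> GDERIV (\<lambda>x. MB_Lag f c \<mu> \<rho> x ss ss) xs :> 0"
    using LB_KKT_imp_MB_KKT[OF assms(3,4), of f xs gf c gc ss] by auto
qed

end
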